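(* Let $\gamma>0$, $n\in\mathbb{N}$, $\nu=\nu^\gamma_{1/3,3}$. Let $P_n$ be the space of (restrictions to $\{x_1+x_2+x_3=1\}$ of) polynomials in $(x_1,x_2,x_3)$ of degree at most $n$, and let $Q_n\subset P_n$ be the linear span of $1$ and $\{F_k,G_k,H_k\}_{1\le k\le n}$, where $F_k=J_k(x_1)+J_k(x_2)+J_k(x_3)$, $G_k=J_k(x_1)-J_k(x_3)$, $H_k=J_k(x_1)-2J_k(x_2)+J_k(x_3)$. If $f\in P_n$ is orthogonal to $Q_n$ in $L^2(\nu)$, then $E_\nu[f\mid x_i]=0$ for each $i=1,2,3$.
   Context: $\nu^{\gamma}(dx)=x^{\gamma-1}e^{-x}\Gamma(\gamma)^{-1}dx$ on $(0,\infty)$ and $\nu^\gamma_{1/3,3}$ is the conditional law of $(\nu^\gamma)^{\otimes3}$ on $\{x\in(0,\infty)^3:x_1+x_2+x_3=1\}$. $J_k(u)=\frac{\Gamma(k+\gamma)}{k!\,\Gamma(k+3\gamma-1)}\sum_{l=0}^k(-1)^l\binom kl\frac{\Gamma(k+l+3\gamma-1)}{\Gamma(l+\gamma)}u^l$ (Jacobi polynomials orthogonal for Beta$(\gamma,2\gamma)$). $E_\nu[\cdot\mid x_i]$ is conditional expectation given the $\sigma$-algebra generated by $x_i$. *)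

theory Defs
  imports "HOL-Probability.Probability"
begin

type_synonym pt3 = "real \<times> real \<times> real"

definition coord :: "nat \<Rightarrow> pt3 \<Rightarrow> real" where
  "coord i p = (if i = 1 then fst p else if i = 2 then fst (snd p) else snd (snd p))"

text \<open>Density (w.r.t. Lebesgue measure in the coordinates (x_1,x_2), with x_3 = 1 - x_1 - x_2)
  of the conditional law of three i.i.d. Gamma(gamma) variables given x_1+x_2+x_3 = 1,
  i.e. the Dirichlet(gamma,gamma,gamma) law.\<close>
definition dirichlet3_density :: "real \<Rightarrow> real \<times> real \<Rightarrow> real" where
  "dirichlet3_density g q =
     (if fst q > 0 \<and> snd q > 0 \<and> fst q + snd q < 1
      then Gamma (3 * g) / (Gamma g ^ 3)
           * (fst q * snd q * (1 - fst q - snd q)) powr (g - 1)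
      else 0)"

definition nu3 :: "real \<Rightarrow> pt3 measure" where
  "nu3 g = distr (density lborel (\<lambda>q. ennreal (dirichlet3_density g q))) borel
                 (\<lambda>q. (fst q, snd q, 1 - fst q - snd q))"

text \<open>Jacobi polynomials J_k orthogonal for Beta(gamma, 2 gamma).\<close>
definition J :: "real \<Rightarrow> nat \<Rightarrow> real \<Rightarrow> real" where
  "J g k u = Gamma (real k + g) / (fact k * Gamma (real k + 3 * g - 1))
     * (\<Sum>l\<le>k. (-1) ^ l * real (k choose l) * Gamma (real (k + l) + 3 * g - 1)
                 / Gamma (real l + g) * u ^ l)"

definition F :: "real \<Rightarrow> nat \<Rightarrow> pt3 \<Rightarrow> real" where
  "F g k p = J g k (coord 1 p) + J g k (coord 2 p) + J g k (coord 3 p)"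

definition G :: "real \<Rightarrow> nat \<Rightarrow> pt3 \<Rightarrow> real" where
  "G g k p = J g k (coord 1 p) - J g k (coord 3 p)"

definition H :: "real \<Rightarrow> nat \<Rightarrow> pt3 \<Rightarrow> real" where
  "H g k p = J g k (coord 1 p) - 2 * J g k (coord 2 p) + J g k (coord 3 p)"

definition poly3_le :: "nat \<Rightarrow> (pt3 \<Rightarrow> real) \<Rightarrow> bool" where
  "poly3_le n f \<longleftrightarrow> (\<exists>c :: nat \<Rightarrow> nat \<Rightarrow> nat \<Rightarrow> real.
     \<forall>x y z. f (x, y, z) =
       (\<Sum>a\<le>n. \<Sum>b\<le>n. \<Sum>d\<le>n. if a + b + d \<le> n then c a b d * x ^ a * y ^ b * z ^ d else 0))"

definition Q_elem :: "real \<Rightarrow> nat \<Rightarrow> (pt3 \<Rightarrow> real) \<Rightarrow> bool" where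
  "Q_elem g n h \<longleftrightarrow> (\<exists>c0 (a :: nat \<Rightarrow> real) b c. \<forall>p.
     h p = c0 + (\<Sum>k\<in>{1..n}. a k * F g k p + b k * G g k p + c k * H g k p))"

end

theory Submission
  imports Defs "HOL-Computational_Algebra.Polynomial"
begin

(* Write nu for the Dirichlet(g,g,g) law nu3 g on the simplex x1+x2+x3 = 1.
   (1) Marginal formula: for a monomial x1^a x2^b x3^d and a bounded function h of x1,
       integrating out x2 (a scaled Beta integral) gives
         E_nu[x1^a x2^b x3^d h(x1)] = c_{abd} \<integral>_0^1 x^a (1-x)^(b+d) w(x) h(x) dx,
       where w(x) = x^(g-1) (1-x)^(2g-1) is the Beta(g,2g) weight.  Summing over the
       monomials of f \<in> P_n gives E_nu[f h(x1)] = \<integral>_0^1 w P h for a one-variable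
       polynomial P of degree \<le> n.
   (2) Every polynomial of degree \<le> n in x_i lies in Q_n: the J_k have nonzero leading
       coefficient, so they span the polynomials of degree \<le> n, and each J_k(x_i) is a
       linear combination of F_k, G_k, H_k.
   (3) Testing orthogonality against P(x1) gives \<integral> w P^2 = 0, hence w P = 0 a.e.,
       hence E_nu[f 1_B(x1)] = 0 for every Borel set B.
   (4) nu is invariant under the transpositions x1<->x2 and x1<->x3, which also preserve
       P_n, so (3) transfers to the coordinates x2 and x3.
   (5) A function whose integral against every indicator of {X \<in> B} vanishes has
       conditional expectation 0 given X; this yields the theorem. *)

lemma dirichlet3_density_measurable [measurable]:
  "dirichlet3_density g \<in> borel_measurable borel"
  unfolding dirichlet3_density_def borel_prod[symmetric] by measurable

lemma dirichlet3_density_nonneg: "g > 0 \<Longrightarrow> 0 \<le> dirichlet3_density g q"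
  unfolding dirichlet3_density_def
  by (auto intro!: mult_nonneg_nonneg divide_nonneg_nonneg Gamma_real_pos less_imp_le)

lemma simplex_param_measurable [measurable]:
  "(\<lambda>q::real\<times>real. (fst q, snd q, 1 - fst q - snd q)) \<in> borel_measurable borel"
  unfolding borel_prod[symmetric] by measurable

lemma sets_nu3 [simp, measurable_cong]: "sets (nu3 g) = sets borel"
  by (simp add: nu3_def)

lemma measurable_nu3: "\<Phi> \<in> borel_measurable borel \<Longrightarrow> \<Phi> \<in> borel_measurable (nu3 g)"
  by (subst measurable_cong_sets[OF sets_nu3 refl]) simp

lemma coord_measurable [measurable]: "coord i \<in> borel_measurable borel"
  unfolding coord_def borel_prod[symmetric] by measurable

lemma nn_integral_nu3:
  assumes [measurable]: "\<Phi> \<in> borel_measurable borel"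
  shows "(\<integral>\<^sup>+p. \<Phi> p \<partial>nu3 g) =
    (\<integral>\<^sup>+x. \<integral>\<^sup>+y. ennreal (dirichlet3_density g (x,y)) * \<Phi> (x, y, 1 - x - y) \<partial>lborel \<partial>lborel)"
proof -
  have "(\<integral>\<^sup>+p. \<Phi> p \<partial>nu3 g) =
      (\<integral>\<^sup>+q. ennreal (dirichlet3_density g q) * \<Phi> (fst q, snd q, 1 - fst q - snd q) \<partial>lborel)"
    unfolding nu3_def by (simp add: nn_integral_distr nn_integral_density)
  also have "\<dots> = (\<integral>\<^sup>+q. ennreal (dirichlet3_density g q) *
      \<Phi> (fst q, snd q, 1 - fst q - snd q) \<partial>(lborel \<Otimes>\<^sub>M lborel))"
    by (simp add: lborel_prod)
  also have "\<dots> = (\<integral>\<^sup>+x. \<integral>\<^sup>+y. ennreal (dirichlet3_density g (x,y)) * \<Phi> (x, y, 1 - x - y) \<partial>lborel \<partial>lborel)"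
    by (subst lborel.nn_integral_fst[symmetric]) (auto simp: lborel_prod)
  finally show ?thesis .
qed

section \<open>Beta integrals\<close>

lemma Beta_pos: "(a::real) > 0 \<Longrightarrow> b > 0 \<Longrightarrow> Beta a b > 0"
  unfolding Beta_def by (intro divide_pos_pos mult_pos_pos Gamma_real_pos) auto

lemma power_mult_powr: "(y::real) > 0 \<Longrightarrow> y ^ b * y powr c = y powr (real b + c)"
  by (simp add: powr_add powr_realpow)

lemma nn_integral_Beta:
  assumes "a > 0" "b > 0"
  shows "(\<integral>\<^sup>+t. ennreal (indicator {0..1} t * (t powr (a-1) * (1-t) powr (b-1))) \<partial>lborel)
         = ennreal (Beta a b)"
  by (rule nn_integral_has_integral_lebesgue[OF _ has_integral_Beta_real[OF assms]]) simp

lemma nn_integral_Beta_scaled: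
  assumes s: "s > 0" and ab: "a > 0" "b > 0"
  shows "(\<integral>\<^sup>+y. ennreal (indicator {0..s} y * (y powr (a-1) * (s-y) powr (b-1))) \<partial>lborel)
         = ennreal (s powr (a+b-1) * Beta a b)"
proof -
  have "(\<integral>\<^sup>+y. ennreal (indicator {0..s} y * (y powr (a-1) * (s-y) powr (b-1))) \<partial>lborel)
     = ennreal \<bar>s\<bar> * (\<integral>\<^sup>+x. ennreal (indicator {0..s} (0 + s*x) *
         ((0 + s*x) powr (a-1) * (s-(0 + s*x)) powr (b-1))) \<partial>lborel)"
    by (rule nn_integral_real_affine) (use s in auto)
  also have "(\<lambda>x. ennreal (indicator {0..s} (0 + s*x) * ((0 + s*x) powr (a-1) * (s-(0 + s*x)) powr (b-1))))
     = (\<lambda>x. ennreal (s powr (a+b-2)) * ennreal (indicator {0..1} x * (x powr (a-1) * (1-x) powr (b-1))))"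
  proof
    fix x
    have range: "s*x \<in> {0..s} \<longleftrightarrow> x \<in> {0..1}" using s
      by (auto simp: zero_le_mult_iff mult_le_cancel_left1)
    show "ennreal (indicator {0..s} (0 + s*x) * ((0 + s*x) powr (a-1) * (s-(0 + s*x)) powr (b-1))) =
          ennreal (s powr (a+b-2)) * ennreal (indicator {0..1} x * (x powr (a-1) * (1-x) powr (b-1)))"
    proof (cases "x \<in> {0..1}")
      case True
      have "s - s*x = s * (1-x)" by (simp add: algebra_simps)
      moreover have "s powr (a+b-2) = s powr (a-1) * s powr (b-1)"
        by (simp add: powr_add[symmetric])
      ultimately show ?thesis using True range s
        by (simp add: powr_mult ennreal_mult'[symmetric] mult_ac)
    next
      case False then show ?thesis using range by simp
    qed
  qed
  also have "ennreal \<bar>s\<bar> * (\<integral>\<^sup>+x. ennreal (s powr (a+b-2)) *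
        ennreal (indicator {0..1} x * (x powr (a-1) * (1-x) powr (b-1))) \<partial>lborel)
     = ennreal s * (ennreal (s powr (a+b-2)) * ennreal (Beta a b))"
    using s by (simp add: nn_integral_cmult nn_integral_Beta[OF ab])
  also have "\<dots> = ennreal (s powr (a+b-1) * Beta a b)"
  proof -
    have "s powr (a+b-1) = s * s powr (a+b-2)"
      using s powr_add[of s 1 "a+b-2"] by simp
    then show ?thesis using s Beta_pos[OF ab]
      by (simp add: ennreal_mult'[symmetric] ennreal_mult[symmetric] mult.assoc)
  qed
  finally show ?thesis .
qed

text \<open>Pulling a real constant of arbitrary sign out of a nonnegative integral
  (both sides vanish when the constant is negative).\<close>
lemma nn_integral_cmult_real:
  assumes "(\<integral>\<^sup>+y. ennreal (\<phi> y) \<partial>M) = ennreal I" "\<And>y. \<phi> y \<ge> 0" "I \<ge> 0"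
    and [measurable]: "\<phi> \<in> borel_measurable M"
  shows "(\<integral>\<^sup>+y. ennreal (K * \<phi> y) \<partial>M) = ennreal (K * I)"
proof (cases "K \<ge> 0")
  case True
  then show ?thesis using assms by (simp add: ennreal_mult nn_integral_cmult)
next
  case False
  then have "\<And>y. ennreal (K * \<phi> y) = 0" using assms(2)
    by (simp add: ennreal_neg mult_nonpos_nonneg)
  moreover have "ennreal (K * I) = 0" using False assms(3) by (simp add: ennreal_neg mult_nonpos_nonneg)
  ultimately show ?thesis by simp
qed

section \<open>The marginal of a monomial\<close>

text \<open>Normalising constant of the Dirichlet(g,g,g) density and the (unnormalised)
  Beta(g, 2g) weight, i.e. the orthogonality weight of the Jacobi polynomials J g k.\<close>
definition dirichlet_const :: "real \<Rightarrow> real" where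
  "dirichlet_const g = Gamma (3 * g) / (Gamma g ^ 3)"

definition beta_weight :: "real \<Rightarrow> real \<Rightarrow> real" where
  "beta_weight g x = x powr (g-1) * (1-x) powr (2*g-1)"

lemma dirichlet_const_pos: "g > 0 \<Longrightarrow> dirichlet_const g > 0"
  by (simp add: dirichlet_const_def Gamma_real_pos)

lemma beta_weight_nonneg: "beta_weight g x \<ge> 0"
  by (simp add: beta_weight_def)

text \<open>Density on (0,1) of the x1-marginal of x1^a x2^b x3^d under nu3 g.\<close>
definition marginal_weight :: "real \<Rightarrow> nat \<Rightarrow> nat \<Rightarrow> nat \<Rightarrow> real \<Rightarrow> real" where
  "marginal_weight g a b d x = indicator {0<..<1} x *
     (dirichlet_const g * Beta (b+g) (d+g) * x^a * (1-x)^(b+d) * beta_weight g x)"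

lemma marginal_weight_measurable [measurable]: "marginal_weight g a b d \<in> borel_measurable borel"
  unfolding marginal_weight_def beta_weight_def by measurable

lemma marginal_weight_nonneg: "g > 0 \<Longrightarrow> marginal_weight g a b d x \<ge> 0"
  unfolding marginal_weight_def beta_weight_def
  using dirichlet_const_pos[of g] Beta_pos[of "b+g" "d+g"]
  by (auto simp: indicator_def intro!: mult_nonneg_nonneg)

text \<open>Integrating out x2 on the segment 0 < x2 < 1 - x1: a scaled Beta integral.\<close>
lemma nn_integral_nu3_monomial:
  assumes g: "g > 0" and [measurable]: "\<Phi> \<in> borel_measurable borel" "h \<in> borel_measurable borel"
    and agree: "\<And>x y z. 0 < x \<Longrightarrow> 0 < y \<Longrightarrow> 0 < z \<Longrightarrow> x + y + z = 1 \<Longrightarrow>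
                  \<Phi> (x,y,z) = x^a * y^b * z^d * h x"
  shows "(\<integral>\<^sup>+p. ennreal (\<Phi> p) \<partial>nu3 g) = (\<integral>\<^sup>+x. ennreal (marginal_weight g a b d x * h x) \<partial>lborel)"
proof -
  have "(\<integral>\<^sup>+p. ennreal (\<Phi> p) \<partial>nu3 g) =
      (\<integral>\<^sup>+x. \<integral>\<^sup>+y. ennreal (dirichlet3_density g (x,y)) * ennreal (\<Phi> (x, y, 1 - x - y)) \<partial>lborel \<partial>lborel)"
    by (rule nn_integral_nu3) measurable
  also have "\<dots> = (\<integral>\<^sup>+x. ennreal (marginal_weight g a b d x * h x) \<partial>lborel)"
  proof (rule nn_integral_cong)
    fix x :: real
    show "(\<integral>\<^sup>+y. ennreal (dirichlet3_density g (x,y)) * ennreal (\<Phi> (x, y, 1 - x - y)) \<partial>lborel) =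
      ennreal (marginal_weight g a b d x * h x)"
    proof (cases "x \<in> {0<..<1}")
      case False
      then have "\<And>y. dirichlet3_density g (x,y) = 0"
        by (auto simp: dirichlet3_density_def)
      then show ?thesis using False by (simp add: marginal_weight_def)
    next
      case True
      define s where "s = 1 - x"
      have s: "s > 0" and x: "x > 0" using True by (simp_all add: s_def)
      define K where "K = dirichlet_const g * x powr (g-1) * x^a * h x"
      have integrand: "ennreal (dirichlet3_density g (x,y)) * ennreal (\<Phi> (x, y, 1 - x - y)) =
          ennreal (K * (indicator {0..s} y * (y powr ((b+g)-1) * (s-y) powr ((d+g)-1))))" for y
      proof (cases "0 < y \<and> y < s")
        case True
        have z: "1 - x - y > 0" using True s_def by simp
        have "dirichlet3_density g (x,y) =
            dirichlet_const g * (x powr (g-1) * y powr (g-1) * (1-x-y) powr (g-1))"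
          using True x z s_def by (simp add: dirichlet3_density_def dirichlet_const_def powr_mult)
        moreover have "\<Phi> (x, y, 1 - x - y) = x^a * y^b * (1-x-y)^d * h x"
          using True x z by (intro agree) auto
        moreover have "y^b * y powr (g-1) = y powr ((b+g)-1)"
          using True power_mult_powr[of y b "g-1"] by (simp add: add_diff_eq)
        moreover have "(1-x-y)^d * (1-x-y) powr (g-1) = (s-y) powr ((d+g)-1)"
          using z power_mult_powr[of "1-x-y" d "g-1"] by (simp add: s_def add_diff_eq)
        ultimately have "dirichlet3_density g (x,y) * \<Phi> (x, y, 1 - x - y) =
            K * (indicator {0..s} y * (y powr ((b+g)-1) * (s-y) powr ((d+g)-1)))"
          using True by (simp add: K_def indicator_def mult_ac)
        then show ?thesis
          using dirichlet3_density_nonneg[OF g] by (simp add: ennreal_mult'[symmetric])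
      next
        case False
        then have "dirichlet3_density g (x,y) = 0" by (auto simp: dirichlet3_density_def s_def)
        moreover have "indicator {0..s} y * (y powr ((b+g)-1) * (s-y) powr ((d+g)-1)) = 0"
          using False by (auto simp: indicator_def)
        ultimately show ?thesis by (metis ennreal_0 mult_zero_left mult_zero_right)
      qed
      have "(\<integral>\<^sup>+y. ennreal (dirichlet3_density g (x,y)) * ennreal (\<Phi> (x, y, 1 - x - y)) \<partial>lborel)
         = ennreal (K * (s powr ((b+g)+(d+g)-1) * Beta (b+g) (d+g)))"
        unfolding integrand
        by (rule nn_integral_cmult_real[OF nn_integral_Beta_scaled[OF s]])
           (use g s Beta_pos[of "b+g" "d+g"] in auto)
      also have "K * (s powr ((b+g)+(d+g)-1) * Beta (b+g) (d+g)) = marginal_weight g a b d x * h x"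
      proof -
        have "(1-x)^(b+d) * (1-x) powr (2*g-1) = s powr ((b+g)+(d+g)-1)"
          using power_mult_powr[OF s, of "b+d" "2*g-1"] by (simp add: s_def algebra_simps)
        then show ?thesis using True by (simp add: K_def marginal_weight_def beta_weight_def mult_ac)
      qed
      finally show ?thesis .
    qed
  qed
  finally show ?thesis .
qed

lemma integral_nu3_monomial:
  assumes g: "g > 0" and [measurable]: "\<Phi> \<in> borel_measurable borel" "h \<in> borel_measurable borel"
    and agree: "\<And>x y z. 0 < x \<Longrightarrow> 0 < y \<Longrightarrow> 0 < z \<Longrightarrow> x + y + z = 1 \<Longrightarrow>
                  \<Phi> (x,y,z) = x^a * y^b * z^d * h x"
  shows "integrable (nu3 g) \<Phi> \<longleftrightarrow> integrable lborel (\<lambda>x. marginal_weight g a b d x * h x)"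
    and "integral\<^sup>L (nu3 g) \<Phi> = (\<integral>x. marginal_weight g a b d x * h x \<partial>lborel)"
proof -
  let ?W = "\<lambda>x. marginal_weight g a b d x * h x"
  have pos: "(\<integral>\<^sup>+p. ennreal (\<Phi> p) \<partial>nu3 g) = (\<integral>\<^sup>+x. ennreal (?W x) \<partial>lborel)"
    by (rule nn_integral_nu3_monomial[OF g assms(2,3) agree])
  have neg: "(\<integral>\<^sup>+p. ennreal (- \<Phi> p) \<partial>nu3 g) = (\<integral>\<^sup>+x. ennreal (marginal_weight g a b d x * - h x) \<partial>lborel)"
    by (rule nn_integral_nu3_monomial[OF g]) (use agree in auto)
  have [measurable]: "\<Phi> \<in> borel_measurable (nu3 g)" by (rule measurable_nu3) simp
  show int: "integrable (nu3 g) \<Phi> \<longleftrightarrow> integrable lborel ?W"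
    unfolding real_integrable_def pos using neg by simp
  show "integral\<^sup>L (nu3 g) \<Phi> = integral\<^sup>L lborel ?W"
  proof (cases "integrable (nu3 g) \<Phi>")
    case True
    then show ?thesis
      using int pos neg by (simp add: real_lebesgue_integral_def)
  next
    case False
    then show ?thesis using int by (simp add: not_integrable_integral_eq)
  qed
qed

lemma nn_integral_marginal_weight:
  assumes g: "g > 0"
  shows "(\<integral>\<^sup>+x. ennreal (marginal_weight g a b d x) \<partial>lborel) =
    ennreal (dirichlet_const g * Beta (b+g) (d+g) * Beta (a+g) (b+d+2*g))"
proof -
  let ?c = "ennreal (dirichlet_const g * Beta (b+g) (d+g))"
  let ?B = "\<lambda>x. ennreal (indicator {0..1} x * (x powr ((a+g)-1) * (1-x) powr ((b+d+2*g)-1)))"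
  have "ennreal (marginal_weight g a b d x) = ?c * ?B x" for x
  proof (cases "x \<in> {0<..<1}")
    case True
    have "x^a * x powr (g-1) = x powr ((a+g)-1)"
      using True power_mult_powr[of x a "g-1"] by (simp add: add_diff_eq)
    moreover have "(1-x)^(b+d) * (1-x) powr (2*g-1) = (1-x) powr ((b+d+2*g)-1)"
      using True power_mult_powr[of "1-x" "b+d" "2*g-1"] by (simp add: add_diff_eq)
    ultimately have "marginal_weight g a b d x = (dirichlet_const g * Beta (b+g) (d+g)) *
        (indicator {0..1} x * (x powr ((a+g)-1) * (1-x) powr ((b+d+2*g)-1)))"
      using True by (simp add: marginal_weight_def beta_weight_def mult_ac)
    then show ?thesis using dirichlet_const_pos[OF g] Beta_pos[of "b+g" "d+g"] g
      by (simp add: ennreal_mult)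
  next
    case False
    then have "marginal_weight g a b d x = 0" by (simp add: marginal_weight_def)
    moreover have "indicator {0..1} x * (x powr ((a+g)-1) * (1-x) powr ((b+d+2*g)-1)) = 0"
      using False by (auto simp: indicator_def)
    ultimately show ?thesis by (metis ennreal_0 mult_zero_right)
  qed
  then have "(\<integral>\<^sup>+x. ennreal (marginal_weight g a b d x) \<partial>lborel) = ?c * (\<integral>\<^sup>+x. ?B x \<partial>lborel)"
    by (simp add: nn_integral_cmult)
  also have "\<dots> = ?c * ennreal (Beta (a+g) (b+d+2*g))"
    using nn_integral_Beta[of "a+g" "b+d+2*g"] g by (simp only:)
  finally show ?thesis
    using g dirichlet_const_pos[OF g] Beta_pos[of "b+g" "d+g"] Beta_pos[of "a+g" "b+d+2*g"]
    by (simp add: ennreal_mult[symmetric])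
qed

lemma integrable_marginal_weight: "g > 0 \<Longrightarrow> integrable lborel (marginal_weight g a b d)"
  by (rule integrableI_nonneg) (auto simp: nn_integral_marginal_weight marginal_weight_nonneg)

lemma integrable_marginal_weight_bounded:
  assumes g: "g > 0" and [measurable]: "h \<in> borel_measurable borel"
    and bound: "\<And>x. x \<in> {0<..<1} \<Longrightarrow> \<bar>h x\<bar> \<le> K"
  shows "integrable lborel (\<lambda>x. marginal_weight g a b d x * h x)"
proof (rule Bochner_Integration.integrable_bound[OF integrable_mult_right[OF integrable_marginal_weight[OF g], of K]])
  show "AE x in lborel. norm (marginal_weight g a b d x * h x) \<le> norm (K * marginal_weight g a b d x)"
  proof (rule AE_I2)
    fix x
    show "norm (marginal_weight g a b d x * h x) \<le> norm (K * marginal_weight g a b d x)"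
    proof (cases "x \<in> {0<..<1}")
      case True
      have "norm (marginal_weight g a b d x * h x) = marginal_weight g a b d x * \<bar>h x\<bar>"
        using marginal_weight_nonneg[OF g, of a b d x] by (simp add: abs_mult)
      also have "\<dots> \<le> marginal_weight g a b d x * K"
        by (rule mult_left_mono[OF bound[OF True] marginal_weight_nonneg[OF g]])
      also have "\<dots> \<le> norm (K * marginal_weight g a b d x)" by (simp add: mult.commute)
      finally show ?thesis .
    next
      case False then show ?thesis by (simp add: marginal_weight_def)
    qed
  qed
qed measurable

lemma finite_measure_nu3: assumes g: "g > 0" shows "finite_measure (nu3 g)"
proof (rule finite_measureI)
  have "emeasure (nu3 g) (space (nu3 g)) = (\<integral>\<^sup>+p. ennreal 1 \<partial>nu3 g)" by simp
  also have "\<dots> = (\<integral>\<^sup>+x. ennreal (marginal_weight g 0 0 0 x * 1) \<partial>lborel)"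
    by (rule nn_integral_nu3_monomial[OF g]) simp_all
  also have "\<dots> < \<infinity>" by (simp add: nn_integral_marginal_weight[OF g])
  finally show "emeasure (nu3 g) (space (nu3 g)) \<noteq> \<infinity>" by simp
qed

definition monomial3 :: "nat \<Rightarrow> nat \<Rightarrow> nat \<Rightarrow> pt3 \<Rightarrow> real" where
  "monomial3 a b d p = fst p ^ a * fst (snd p) ^ b * snd (snd p) ^ d"

lemma monomial3_measurable [measurable]: "monomial3 a b d \<in> borel_measurable borel"
  unfolding monomial3_def borel_prod[symmetric] by measurable

lemma poly3_le_measurable:
  assumes "poly3_le n f" shows "f \<in> borel_measurable borel"
proof -
  obtain c where f: "\<forall>x y z. f (x, y, z) = (\<Sum>a\<le>n. \<Sum>b\<le>n. \<Sum>d\<le>n.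
      if a + b + d \<le> n then c a b d * x ^ a * y ^ b * z ^ d else 0)"
    using assms unfolding poly3_le_def by blast
  have "f = (\<lambda>p. \<Sum>a\<le>n. \<Sum>b\<le>n. \<Sum>d\<le>n. if a + b + d \<le> n
      then c a b d * fst p ^ a * fst (snd p) ^ b * snd (snd p) ^ d else 0)"
    by (rule ext, metis f prod.collapse)
  then show ?thesis unfolding borel_prod[symmetric] by simp
qed

text \<open>One-variable polynomial whose product with the Beta(g,2g) weight is the
  x1-marginal density of the polynomial with coefficients c.\<close>
definition marginal_poly :: "real \<Rightarrow> nat \<Rightarrow> (nat \<Rightarrow> nat \<Rightarrow> nat \<Rightarrow> real) \<Rightarrow> real poly" where
  "marginal_poly g n c = (\<Sum>a\<le>n. \<Sum>b\<le>n. \<Sum>d\<le>n.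
     smult ((if a + b + d \<le> n then c a b d else 0) * (dirichlet_const g * Beta (b+g) (d+g)))
       ([:0,1:]^a * [:1,-1:]^(b+d)))"

lemma degree_marginal_poly: "degree (marginal_poly g n c) \<le> n"
  unfolding marginal_poly_def
proof (intro degree_sum_le)
  fix a b d assume "a \<in> {..n}" "b \<in> {..n}" "d \<in> {..n}"
  let ?m = "[:0,1:]^a * [:1,-1:]^(b+d) :: real poly"
  have "degree ?m \<le> degree ([:0,1:]^a :: real poly) + degree ([:1,-1:]^(b+d) :: real poly)"
    by (rule degree_mult_le)
  also have "\<dots> \<le> 1 * a + 1 * (b + d)"
    by (intro add_mono order.trans[OF degree_power_le]) simp_all
  finally have "degree ?m \<le> a + (b + d)" by simp
  then show "degree (smult ((if a + b + d \<le> n then c a b d else 0) * (dirichlet_const g * Beta (b+g) (d+g))) ?m) \<le> n"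
    by (cases "a + b + d \<le> n") (auto intro: order.trans[OF degree_smult_le])
qed simp_all

lemma integral_poly3_coord1:
  assumes g: "g > 0" and [measurable]: "h \<in> borel_measurable borel"
    and bound: "\<And>x. x \<in> {0<..<1} \<Longrightarrow> \<bar>h x\<bar> \<le> K"
    and f: "\<forall>x y z. f (x, y, z) = (\<Sum>a\<le>n. \<Sum>b\<le>n. \<Sum>d\<le>n.
              if a + b + d \<le> n then c a b d * x ^ a * y ^ b * z ^ d else 0)"
  defines "W \<equiv> \<lambda>x. indicator {0<..<1} x * beta_weight g x * poly (marginal_poly g n c) x"
  shows "integrable (nu3 g) (\<lambda>p. f p * h (coord 1 p))"
    and "integrable lborel (\<lambda>x. W x * h x)"
    and "(\<integral>p. f p * h (coord 1 p) \<partial>nu3 g) = (\<integral>x. W x * h x \<partial>lborel)"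
proof -
  let ?k = "\<lambda>a b d. if a + b + d \<le> n then c a b d else 0"
  have f_expand: "(\<lambda>p. f p * h (coord 1 p)) =
      (\<lambda>p. \<Sum>a\<le>n. \<Sum>b\<le>n. \<Sum>d\<le>n. ?k a b d * (monomial3 a b d p * h (coord 1 p)))"
  proof
    fix p :: pt3
    obtain x y z where p: "p = (x,y,z)" by (cases p) auto
    show "f p * h (coord 1 p) = (\<Sum>a\<le>n. \<Sum>b\<le>n. \<Sum>d\<le>n. ?k a b d * (monomial3 a b d p * h (coord 1 p)))"
      unfolding p f[rule_format] sum_distrib_right
      by (intro sum.cong refl) (simp add: monomial3_def)
  qed
  have W_expand: "(\<lambda>x. W x * h x) =
      (\<lambda>x. \<Sum>a\<le>n. \<Sum>b\<le>n. \<Sum>d\<le>n. ?k a b d * (marginal_weight g a b d x * h x))"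
    unfolding W_def marginal_poly_def poly_sum sum_distrib_left sum_distrib_right
    by (intro ext sum.cong refl) (simp add: marginal_weight_def poly_monom mult_ac)
  note weight = integrable_marginal_weight_bounded[OF g assms(2) bound]
  have monomial: "integrable (nu3 g) (\<lambda>p. monomial3 a b d p * h (coord 1 p)) \<and>
      (\<integral>p. monomial3 a b d p * h (coord 1 p) \<partial>nu3 g) = (\<integral>x. marginal_weight g a b d x * h x \<partial>lborel)"
    for a b d
  proof -
    have "(\<lambda>p. monomial3 a b d p * h (coord 1 p)) \<in> borel_measurable borel" by measurable
    moreover have "monomial3 a b d (x,y,z) * h (coord 1 (x,y,z)) = x^a * y^b * z^d * h x" for x y z
      by (simp add: monomial3_def coord_def)
    ultimately show ?thesis
      using integral_nu3_monomial[OF g _ assms(2), of "\<lambda>p. monomial3 a b d p * h (coord 1 p)" a b d] weight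
      by blast
  qed
  show "integrable (nu3 g) (\<lambda>p. f p * h (coord 1 p))"
    unfolding f_expand using monomial by simp
  show "integrable lborel (\<lambda>x. W x * h x)"
    unfolding W_expand using weight by simp
  show "(\<integral>p. f p * h (coord 1 p) \<partial>nu3 g) = (\<integral>x. W x * h x \<partial>lborel)"
    unfolding f_expand W_expand using monomial weight
    by (simp add: integral_sum integrable_sum integrable_mult_right)
qed

section \<open>Polynomials in one coordinate belong to Q_n\<close>

definition jacobi_coeff :: "real \<Rightarrow> nat \<Rightarrow> nat \<Rightarrow> real" where
  "jacobi_coeff g k l = Gamma (real k + g) / (fact k * Gamma (real k + 3 * g - 1))
     * ((-1) ^ l * real (k choose l) * Gamma (real (k + l) + 3 * g - 1) / Gamma (real l + g))"

definition jacobi_poly :: "real \<Rightarrow> nat \<Rightarrow> real poly" where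
  "jacobi_poly g k = (\<Sum>l\<le>k. monom (jacobi_coeff g k l) l)"

lemma poly_jacobi_poly: "poly (jacobi_poly g k) u = J g k u"
  unfolding jacobi_poly_def J_def poly_sum poly_monom sum_distrib_left jacobi_coeff_def
  by (intro sum.cong refl) (simp add: mult_ac)

lemma degree_jacobi_poly: "degree (jacobi_poly g k) \<le> k"
  unfolding jacobi_poly_def by (intro degree_sum_le) (auto intro: order.trans[OF degree_monom_le])

lemma lead_coeff_jacobi_poly: "coeff (jacobi_poly g k) k = jacobi_coeff g k k"
  unfolding jacobi_poly_def coeff_sum coeff_monom by simp

lemma jacobi_coeff_top_nonzero:
  assumes "g > 0" "k \<ge> 1" shows "jacobi_coeff g k k \<noteq> 0"
proof -
  have "Gamma (real k + g) > 0" "Gamma (real k + 3 * g - 1) > 0" "Gamma (real (k + k) + 3 * g - 1) > 0"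
    using assms by (auto intro!: Gamma_real_pos)
  then show ?thesis unfolding jacobi_coeff_def by simp
qed

text \<open>Since J g k has degree exactly k, the J g k with 1 \<le> k \<le> n together with the
  constants span all polynomials of degree at most n (induction on n, subtracting
  a multiple of J g n to lower the degree).\<close>
lemma jacobi_span:
  assumes g: "g > 0" and "degree p \<le> n"
  shows "\<exists>c0 a. \<forall>u. poly p u = c0 + (\<Sum>k\<in>{1..n}. a k * J g k u)"
  using assms(2)
proof (induction n arbitrary: p)
  case 0
  then obtain c where "p = [:c:]" using degree0_coeffs by blast
  then show ?case by (intro exI[of _ c] exI[of _ "\<lambda>_::nat. 0::real"]) simp
next
  case (Suc n)
  define l where "l = jacobi_coeff g (Suc n) (Suc n)"
  have l: "l \<noteq> 0" unfolding l_def by (rule jacobi_coeff_top_nonzero[OF g]) simp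
  define q where "q = p - smult (coeff p (Suc n) / l) (jacobi_poly g (Suc n))"
  have "degree (smult (coeff p (Suc n) / l) (jacobi_poly g (Suc n))) \<le> Suc n"
    using degree_jacobi_poly[of g "Suc n"] degree_smult_le order.trans by blast
  then have degree_q: "degree q \<le> Suc n" unfolding q_def by (rule degree_diff_le[OF Suc.prems])
  have "degree q \<le> n"
  proof (rule degree_le, intro allI impI)
    fix i assume "n < i"
    show "coeff q i = 0"
    proof (cases "i = Suc n")
      case True
      then show ?thesis using l by (simp add: q_def lead_coeff_jacobi_poly l_def[symmetric])
    next
      case False
      then have "degree q < i" using degree_q \<open>n < i\<close> by simp
      then show ?thesis by (rule coeff_eq_0)
    qed
  qed
  from Suc.IH[OF this] obtain c0 a where ca: "\<forall>u. poly q u = c0 + (\<Sum>k\<in>{1..n}. a k * J g k u)"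
    by blast
  define a' where "a' = a(Suc n := coeff p (Suc n) / l)"
  have "poly p u = c0 + (\<Sum>k\<in>{1..Suc n}. a' k * J g k u)" for u
  proof -
    have "poly p u = poly q u + coeff p (Suc n) / l * J g (Suc n) u"
      by (simp add: q_def poly_jacobi_poly)
    also have "\<dots> = c0 + (\<Sum>k\<in>{1..n}. a' k * J g k u) + a' (Suc n) * J g (Suc n) u"
      using ca by (simp add: a'_def)
    also have "\<dots> = c0 + (\<Sum>k\<in>{1..Suc n}. a' k * J g k u)"
      by (simp add: sum.cl_ivl_Suc)
    finally show ?thesis .
  qed
  then show ?case by blast
qed

lemma J_coord_in_FGH:
  assumes "i \<in> {1,2,3}"
  obtains \<alpha> \<beta> \<delta> where "\<And>k p. J g k (coord i p) = \<alpha> * F g k p + \<beta> * G g k p + \<delta> * H g k p"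
proof -
  consider "i = 1" | "i = 2" | "i = 3" using assms by auto
  then show ?thesis
  proof cases
    case 1
    show ?thesis by (rule that[of "1/3" "1/2" "1/6"]) (simp add: 1 F_def G_def H_def field_simps)
  next
    case 2
    show ?thesis by (rule that[of "1/3" 0 "-1/3"]) (simp add: 2 F_def G_def H_def field_simps)
  next
    case 3
    show ?thesis by (rule that[of "1/3" "-1/2" "1/6"]) (simp add: 3 F_def G_def H_def field_simps)
  qed
qed

lemma Q_elem_poly_coord:
  assumes g: "g > 0" and i: "i \<in> {1,2,3}" and "degree P \<le> n"
  shows "Q_elem g n (\<lambda>p. poly P (coord i p))"
proof -
  obtain c0 a where span: "\<forall>u. poly P u = c0 + (\<Sum>k\<in>{1..n}. a k * J g k u)"
    using jacobi_span[OF g assms(3)] by blast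
  obtain \<alpha> \<beta> \<delta> where J: "\<And>k p. J g k (coord i p) = \<alpha> * F g k p + \<beta> * G g k p + \<delta> * H g k p"
    using J_coord_in_FGH[OF i] by blast
  have "poly P (coord i p) = c0 + (\<Sum>k\<in>{1..n}.
      (a k * \<alpha>) * F g k p + (a k * \<beta>) * G g k p + (a k * \<delta>) * H g k p)" for p
    unfolding span[rule_format] J by (simp add: algebra_simps)
  then show ?thesis unfolding Q_elem_def
    by (intro exI[of _ c0] exI[of _ "\<lambda>k. a k * \<alpha>"] exI[of _ "\<lambda>k. a k * \<beta>"]
        exI[of _ "\<lambda>k. a k * \<delta>"]) simp
qed

section \<open>Orthogonality against functions of x1\<close>

text \<open>If f \<in> P_n is orthogonal to all polynomials of degree \<le> n in x1, then it is
  orthogonal to all indicators of events {x1 \<in> B}: its marginal w P satisfies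
  \<integral> w P^2 = 0, so w P vanishes almost everywhere.\<close>
lemma orthogonal_indicator_coord1:
  assumes g: "g > 0" and f: "poly3_le n f"
    and orth: "\<And>P. degree P \<le> n \<Longrightarrow> (\<integral>p. f p * poly P (coord 1 p) \<partial>nu3 g) = 0"
    and B: "B \<in> sets borel"
  shows "integrable (nu3 g) (\<lambda>p. f p * indicator B (coord 1 p))"
    and "(\<integral>p. f p * indicator B (coord 1 p) \<partial>nu3 g) = 0"
proof -
  obtain c where c: "\<forall>x y z. f (x, y, z) = (\<Sum>a\<le>n. \<Sum>b\<le>n. \<Sum>d\<le>n.
      if a + b + d \<le> n then c a b d * x ^ a * y ^ b * z ^ d else 0)"
    using f unfolding poly3_le_def by blast
  define P where "P = marginal_poly g n c"
  define W where "W = (\<lambda>x. indicator {0<..<1} x * beta_weight g x * poly P x)"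
  have "compact (poly P ` {0..1})"
    by (intro compact_continuous_image continuous_intros) auto
  then obtain K where K: "\<forall>y\<in>poly P ` {0..1}. norm y \<le> K"
    using compact_imp_bounded bounded_iff by metis
  have P_bound: "\<And>x. x \<in> {0<..<1} \<Longrightarrow> \<bar>poly P x\<bar> \<le> K" using K by auto
  have [measurable]: "poly P \<in> borel_measurable borel"
    by (intro borel_measurable_continuous_onI continuous_intros)
  note marginal_P = integral_poly3_coord1[where h = "poly P", OF g _ P_bound c, folded P_def]
  have W_P_integrable: "integrable lborel (\<lambda>x. W x * poly P x)"
    using marginal_P by (simp add: W_def)
  have "(\<integral>x. W x * poly P x \<partial>lborel) = 0"
    using marginal_P orth[OF degree_marginal_poly[of g n c, folded P_def]] by (simp add: W_def)
  moreover have "AE x in lborel. 0 \<le> W x * poly P x"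
  proof (rule AE_I2)
    fix x
    have "W x * poly P x = indicator {0<..<1} x * beta_weight g x * (poly P x)\<^sup>2"
      by (simp add: W_def power2_eq_square mult_ac)
    then show "0 \<le> W x * poly P x" by (simp add: beta_weight_nonneg)
  qed
  ultimately have "AE x in lborel. W x * poly P x = 0"
    using integral_nonneg_eq_0_iff_AE[OF W_P_integrable] by simp
  then have W_null: "AE x in lborel. W x = 0"
    by eventually_elim (auto simp: W_def)
  have indicator_bound: "\<And>x. x \<in> {0<..<1} \<Longrightarrow> \<bar>indicator B x\<bar> \<le> (1::real)"
    by (simp add: indicator_def)
  have [measurable]: "indicator B \<in> borel_measurable borel" using B by measurable
  note marginal_B = integral_poly3_coord1[where h = "indicator B", OF g _ indicator_bound c, folded P_def]
  show "integrable (nu3 g) (\<lambda>p. f p * indicator B (coord 1 p))" by (rule marginal_B) simp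
  have "(\<integral>x. W x * indicator B x \<partial>lborel) = 0"
    by (rule integral_eq_zero_AE) (use W_null in auto)
  then show "(\<integral>p. f p * indicator B (coord 1 p) \<partial>nu3 g) = 0"
    using marginal_B by (simp add: W_def)
qed

section \<open>Invariance under permutations of the coordinates\<close>

definition swap12 :: "pt3 \<Rightarrow> pt3" where "swap12 p = (fst (snd p), fst p, snd (snd p))"
definition swap13 :: "pt3 \<Rightarrow> pt3" where "swap13 p = (snd (snd p), fst (snd p), fst p)"

lemma swap12_measurable [measurable]: "swap12 \<in> borel_measurable borel"
  unfolding swap12_def borel_prod[symmetric] by measurable

lemma swap13_measurable [measurable]: "swap13 \<in> borel_measurable borel"
  unfolding swap13_def borel_prod[symmetric] by measurable

definition simplex_integrand :: "real \<Rightarrow> (pt3 \<Rightarrow> ennreal) \<Rightarrow> real \<times> real \<Rightarrow> ennreal" where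
  "simplex_integrand g \<Phi> q = ennreal (dirichlet3_density g q) * \<Phi> (fst q, snd q, 1 - fst q - snd q)"

lemma simplex_integrand_measurable [measurable]:
  assumes [measurable]: "\<Phi> \<in> borel_measurable borel"
  shows "simplex_integrand g \<Phi> \<in> borel_measurable borel"
  unfolding simplex_integrand_def by measurable

lemma nn_integral_nu3_simplex: "\<Phi> \<in> borel_measurable borel \<Longrightarrow>
   (\<integral>\<^sup>+p. \<Phi> p \<partial>nu3 g) = (\<integral>\<^sup>+x. \<integral>\<^sup>+y. simplex_integrand g \<Phi> (x,y) \<partial>lborel \<partial>lborel)"
  unfolding simplex_integrand_def by (simp add: nn_integral_nu3)

lemma nn_integral_lborel_swap:
  fixes \<Psi> :: "real \<times> real \<Rightarrow> ennreal"
  assumes [measurable]: "\<Psi> \<in> borel_measurable borel"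
  shows "(\<integral>\<^sup>+x. \<integral>\<^sup>+y. \<Psi> (x, y) \<partial>lborel \<partial>lborel) = (\<integral>\<^sup>+y. \<integral>\<^sup>+x. \<Psi> (x, y) \<partial>lborel \<partial>lborel)"
proof -
  have "\<Psi> \<in> borel_measurable (lborel \<Otimes>\<^sub>M lborel)" by (simp add: lborel_prod)
  then show ?thesis using lborel.nn_integral_fst lborel_pair.nn_integral_snd by metis
qed

lemma dirichlet3_density_swap: "dirichlet3_density g (y,x) = dirichlet3_density g (x,y)"
  unfolding dirichlet3_density_def by (simp add: diff_diff_eq add.commute mult_ac)

lemma dirichlet3_density_swap13: "dirichlet3_density g (1-x-y,y) = dirichlet3_density g (x,y)"
  unfolding dirichlet3_density_def by (auto simp: mult_ac algebra_simps)

lemma nn_integral_nu3_swap12: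
  assumes [measurable]: "\<Phi> \<in> borel_measurable borel"
  shows "(\<integral>\<^sup>+p. \<Phi> (swap12 p) \<partial>nu3 g) = (\<integral>\<^sup>+p. \<Phi> p \<partial>nu3 g)"
proof -
  have [measurable]: "(\<lambda>q. simplex_integrand g \<Phi> (snd q, fst q)) \<in> borel_measurable borel"
    by (rule measurable_compose[OF _ simplex_integrand_measurable[OF assms]])
       (unfold borel_prod[symmetric], measurable)
  have "(\<integral>\<^sup>+p. \<Phi> (swap12 p) \<partial>nu3 g) =
      (\<integral>\<^sup>+x. \<integral>\<^sup>+y. simplex_integrand g (\<lambda>p. \<Phi> (swap12 p)) (x,y) \<partial>lborel \<partial>lborel)"
    by (rule nn_integral_nu3_simplex) measurable
  also have "\<dots> = (\<integral>\<^sup>+x. \<integral>\<^sup>+y. simplex_integrand g \<Phi> (y,x) \<partial>lborel \<partial>lborel)"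
    by (simp add: simplex_integrand_def swap12_def dirichlet3_density_swap algebra_simps)
  also have "\<dots> = (\<integral>\<^sup>+y. \<integral>\<^sup>+x. simplex_integrand g \<Phi> (y,x) \<partial>lborel \<partial>lborel)"
    using nn_integral_lborel_swap[of "\<lambda>q. simplex_integrand g \<Phi> (snd q, fst q)"] by simp
  also have "\<dots> = (\<integral>\<^sup>+p. \<Phi> p \<partial>nu3 g)"
    by (rule nn_integral_nu3_simplex[symmetric]) simp
  finally show ?thesis .
qed

lemma nn_integral_nu3_swap13:
  assumes [measurable]: "\<Phi> \<in> borel_measurable borel"
  shows "(\<integral>\<^sup>+p. \<Phi> (swap13 p) \<partial>nu3 g) = (\<integral>\<^sup>+p. \<Phi> p \<partial>nu3 g)"
proof -
  have [measurable]: "(\<lambda>q. simplex_integrand g \<Phi> (1 - fst q - snd q, snd q)) \<in> borel_measurable borel"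
    by (rule measurable_compose[OF _ simplex_integrand_measurable[OF assms]])
       (unfold borel_prod[symmetric], measurable)
  have reflect: "(\<integral>\<^sup>+x. simplex_integrand g \<Phi> (1-x-y,y) \<partial>lborel) =
      (\<integral>\<^sup>+x. simplex_integrand g \<Phi> (x,y) \<partial>lborel)" for y
  proof -
    have [measurable]: "(\<lambda>x. simplex_integrand g \<Phi> (x,y)) \<in> borel_measurable borel"
      by (rule measurable_compose[OF _ simplex_integrand_measurable[OF assms]])
         (unfold borel_prod[symmetric], measurable)
    have "(\<integral>\<^sup>+x. simplex_integrand g \<Phi> (x,y) \<partial>lborel) =
        ennreal \<bar>-1\<bar> * (\<integral>\<^sup>+x. simplex_integrand g \<Phi> ((1-y) + (-1) * x,y) \<partial>lborel)"
      by (rule nn_integral_real_affine) simp_all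
    then show ?thesis by (simp add: algebra_simps)
  qed
  have "(\<integral>\<^sup>+p. \<Phi> (swap13 p) \<partial>nu3 g) =
      (\<integral>\<^sup>+x. \<integral>\<^sup>+y. simplex_integrand g (\<lambda>p. \<Phi> (swap13 p)) (x,y) \<partial>lborel \<partial>lborel)"
    by (rule nn_integral_nu3_simplex) measurable
  also have "\<dots> = (\<integral>\<^sup>+x. \<integral>\<^sup>+y. simplex_integrand g \<Phi> (1-x-y,y) \<partial>lborel \<partial>lborel)"
    by (simp add: simplex_integrand_def swap13_def dirichlet3_density_swap13)
  also have "\<dots> = (\<integral>\<^sup>+y. \<integral>\<^sup>+x. simplex_integrand g \<Phi> (1-x-y,y) \<partial>lborel \<partial>lborel)"
    using nn_integral_lborel_swap[of "\<lambda>q. simplex_integrand g \<Phi> (1 - fst q - snd q, snd q)"] by simp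
  also have "\<dots> = (\<integral>\<^sup>+y. \<integral>\<^sup>+x. simplex_integrand g \<Phi> (x,y) \<partial>lborel \<partial>lborel)"
    by (simp add: reflect)
  also have "\<dots> = (\<integral>\<^sup>+x. \<integral>\<^sup>+y. simplex_integrand g \<Phi> (x,y) \<partial>lborel \<partial>lborel)"
    by (rule nn_integral_lborel_swap[symmetric]) simp
  also have "\<dots> = (\<integral>\<^sup>+p. \<Phi> p \<partial>nu3 g)"
    by (rule nn_integral_nu3_simplex[symmetric]) simp
  finally show ?thesis .
qed

lemma distr_nu3_eqI:
  assumes [measurable]: "\<sigma> \<in> borel_measurable borel"
    and invariant: "\<And>\<Phi>. \<Phi> \<in> borel_measurable borel \<Longrightarrow> (\<integral>\<^sup>+p. \<Phi> (\<sigma> p) \<partial>nu3 g) = (\<integral>\<^sup>+p. \<Phi> p \<partial>nu3 g)"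
  shows "distr (nu3 g) borel \<sigma> = nu3 g"
proof (rule measure_eqI)
  fix A assume "A \<in> sets (distr (nu3 g) borel \<sigma>)"
  then have [measurable]: "A \<in> sets borel" by simp
  have "emeasure (distr (nu3 g) borel \<sigma>) A = (\<integral>\<^sup>+p. indicator A p \<partial>distr (nu3 g) borel \<sigma>)"
    by (simp add: nn_integral_indicator)
  also have "\<dots> = (\<integral>\<^sup>+p. indicator A (\<sigma> p) \<partial>nu3 g)"
    by (rule nn_integral_distr) (simp_all add: measurable_nu3)
  also have "\<dots> = emeasure (nu3 g) A"
    by (simp add: invariant nn_integral_indicator)
  finally show "emeasure (distr (nu3 g) borel \<sigma>) A = emeasure (nu3 g) A" .
qed simp

lemma distr_nu3_swap12: "distr (nu3 g) borel swap12 = nu3 g"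
  by (rule distr_nu3_eqI[OF swap12_measurable nn_integral_nu3_swap12])

lemma distr_nu3_swap13: "distr (nu3 g) borel swap13 = nu3 g"
  by (rule distr_nu3_eqI[OF swap13_measurable nn_integral_nu3_swap13])

lemma poly3_le_swap12: "poly3_le n f \<Longrightarrow> poly3_le n (\<lambda>p. f (swap12 p))"
proof -
  assume "poly3_le n f"
  then obtain c where c: "\<forall>x y z. f (x, y, z) = (\<Sum>a\<le>n. \<Sum>b\<le>n. \<Sum>d\<le>n.
      if a + b + d \<le> n then c a b d * x ^ a * y ^ b * z ^ d else 0)"
    unfolding poly3_le_def by blast
  have "f (swap12 (x, y, z)) = (\<Sum>a\<le>n. \<Sum>b\<le>n. \<Sum>d\<le>n.
      if a + b + d \<le> n then c b a d * x ^ a * y ^ b * z ^ d else 0)" (is "_ = ?rhs") for x y z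
  proof -
    have "f (swap12 (x, y, z)) = (\<Sum>a\<le>n. \<Sum>b\<le>n. \<Sum>d\<le>n.
        if a + b + d \<le> n then c a b d * y ^ a * x ^ b * z ^ d else 0)"
      using c by (simp add: swap12_def)
    also have "\<dots> = (\<Sum>b\<le>n. \<Sum>a\<le>n. \<Sum>d\<le>n.
        if a + b + d \<le> n then c a b d * y ^ a * x ^ b * z ^ d else 0)"
      by (rule sum.swap)
    also have "\<dots> = ?rhs" by (intro sum.cong refl) (simp add: ac_simps)
    finally show ?thesis .
  qed
  then show ?thesis unfolding poly3_le_def by (intro exI[of _ "\<lambda>a b d. c b a d"]) blast
qed

lemma poly3_le_swap13: "poly3_le n f \<Longrightarrow> poly3_le n (\<lambda>p. f (swap13 p))"
proof -
  assume "poly3_le n f"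
  then obtain c where c: "\<forall>x y z. f (x, y, z) = (\<Sum>a\<le>n. \<Sum>b\<le>n. \<Sum>d\<le>n.
      if a + b + d \<le> n then c a b d * x ^ a * y ^ b * z ^ d else 0)"
    unfolding poly3_le_def by blast
  have "f (swap13 (x, y, z)) = (\<Sum>a\<le>n. \<Sum>b\<le>n. \<Sum>d\<le>n.
      if a + b + d \<le> n then c d b a * x ^ a * y ^ b * z ^ d else 0)" (is "_ = ?rhs") for x y z
  proof -
    let ?t = "\<lambda>a b d. if a + b + d \<le> n then c a b d * z ^ a * y ^ b * x ^ d else 0"
    have "f (swap13 (x, y, z)) = (\<Sum>a\<le>n. \<Sum>b\<le>n. \<Sum>d\<le>n. ?t a b d)"
      using c by (simp add: swap13_def)
    also have "\<dots> = (\<Sum>a\<le>n. \<Sum>d\<le>n. \<Sum>b\<le>n. ?t a b d)"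
      by (rule sum.cong[OF refl]) (rule sum.swap)
    also have "\<dots> = (\<Sum>d\<le>n. \<Sum>a\<le>n. \<Sum>b\<le>n. ?t a b d)" by (rule sum.swap)
    also have "\<dots> = (\<Sum>d\<le>n. \<Sum>b\<le>n. \<Sum>a\<le>n. ?t a b d)"
      by (rule sum.cong[OF refl]) (rule sum.swap)
    also have "\<dots> = ?rhs" by (intro sum.cong refl) (simp add: ac_simps)
    finally show ?thesis .
  qed
  then show ?thesis unfolding poly3_le_def by (intro exI[of _ "\<lambda>a b d. c d b a"]) blast
qed

lemma integral_nu3_transfer:
  fixes \<Psi> :: "pt3 \<Rightarrow> real"
  assumes [measurable]: "\<sigma> \<in> borel_measurable borel" and preserving: "distr (nu3 g) borel \<sigma> = nu3 g"
    and [measurable]: "\<Psi> \<in> borel_measurable borel"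
  shows "integral\<^sup>L (nu3 g) (\<lambda>p. \<Psi> (\<sigma> p)) = integral\<^sup>L (nu3 g) \<Psi>"
    and "integrable (nu3 g) (\<lambda>p. \<Psi> (\<sigma> p)) \<longleftrightarrow> integrable (nu3 g) \<Psi>"
proof -
  have \<sigma>: "\<sigma> \<in> measurable (nu3 g) borel" by (rule measurable_nu3) simp
  show "integral\<^sup>L (nu3 g) (\<lambda>p. \<Psi> (\<sigma> p)) = integral\<^sup>L (nu3 g) \<Psi>"
    using integral_distr[OF \<sigma>, of \<Psi>] preserving by simp
  show "integrable (nu3 g) (\<lambda>p. \<Psi> (\<sigma> p)) \<longleftrightarrow> integrable (nu3 g) \<Psi>"
    using integrable_distr_eq[OF \<sigma>, of \<Psi>] preserving by simp
qed

lemma coordinate_permutation: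
  assumes "i \<in> {1,2,3}"
  obtains \<sigma> where "\<sigma> \<in> borel_measurable borel" "distr (nu3 g) borel \<sigma> = nu3 g"
    "\<And>p. coord i (\<sigma> p) = coord 1 p" "\<And>f. poly3_le n f \<Longrightarrow> poly3_le n (\<lambda>p. f (\<sigma> p))"
proof -
  consider "i = 1" | "i = 2" | "i = 3" using assms by auto
  then show ?thesis
  proof cases
    case 1
    then show ?thesis by (intro that[of "\<lambda>p. p"]) (simp_all add: distr_id2)
  next
    case 2
    then show ?thesis
      by (intro that[of swap12] distr_nu3_swap12 poly3_le_swap12) (simp_all add: swap12_def coord_def)
  next
    case 3
    then show ?thesis
      by (intro that[of swap13] distr_nu3_swap13 poly3_le_swap13) (simp_all add: swap13_def coord_def)
  qed
qed

lemma orthogonal_indicator_coord: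
  assumes g: "g > 0" and f: "poly3_le n f"
    and orth: "\<forall>h. Q_elem g n h \<longrightarrow> (\<integral>p. f p * h p \<partial>nu3 g) = 0"
    and i: "i \<in> {1,2,3}" and B: "B \<in> sets borel"
  shows "integrable (nu3 g) (\<lambda>p. f p * indicator B (coord i p))"
    and "(\<integral>p. f p * indicator B (coord i p) \<partial>nu3 g) = 0"
proof -
  obtain \<sigma> where \<sigma>_measurable [measurable]: "\<sigma> \<in> borel_measurable borel"
    and preserving: "distr (nu3 g) borel \<sigma> = nu3 g"
    and coord_\<sigma>: "\<And>p. coord i (\<sigma> p) = coord 1 p"
    and poly_\<sigma>: "\<And>f. poly3_le n f \<Longrightarrow> poly3_le n (\<lambda>p. f (\<sigma> p))"
    using coordinate_permutation[OF i] by metis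
  have [measurable]: "f \<in> borel_measurable borel" by (rule poly3_le_measurable[OF f])
  have orth1: "(\<integral>p. f (\<sigma> p) * poly P (coord 1 p) \<partial>nu3 g) = 0" if "degree P \<le> n" for P
  proof -
    have [measurable]: "poly P \<in> borel_measurable borel"
      by (intro borel_measurable_continuous_onI continuous_intros)
    have "(\<integral>p. f (\<sigma> p) * poly P (coord 1 p) \<partial>nu3 g) =
        (\<integral>p. f (\<sigma> p) * poly P (coord i (\<sigma> p)) \<partial>nu3 g)"
      by (simp add: coord_\<sigma>)
    also have "\<dots> = (\<integral>p. f p * poly P (coord i p) \<partial>nu3 g)"
      by (rule integral_nu3_transfer(1)[OF _ preserving]) measurable
    also have "\<dots> = 0" using orth Q_elem_poly_coord[OF g i that] by blast
    finally show ?thesis .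
  qed
  note orth_indicator = orthogonal_indicator_coord1[OF g poly_\<sigma>[OF f] orth1 B]
  have "(\<lambda>p. f p * indicator B (coord i p)) \<in> borel_measurable borel"
    using B by measurable
  note transfer = integral_nu3_transfer[OF \<sigma>_measurable preserving this]
  have pullback: "(\<lambda>p. f (\<sigma> p) * indicator B (coord 1 p)) = (\<lambda>p. f (\<sigma> p) * indicator B (coord i (\<sigma> p)))"
    by (simp add: coord_\<sigma>)
  show "integrable (nu3 g) (\<lambda>p. f p * indicator B (coord i p))"
    using orth_indicator(1) transfer(2) unfolding pullback by simp
  show "(\<integral>p. f p * indicator B (coord i p) \<partial>nu3 g) = 0"
    using orth_indicator(2) transfer(1) unfolding pullback by simp
qed

section \<open>Conditional expectations\<close>

lemma real_cond_exp_vimage_eq_0: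
  assumes "finite_measure M" and X: "X \<in> measurable M N" and "integrable M f"
    and orth: "\<And>B. B \<in> sets N \<Longrightarrow> (\<integral>p. f p * indicator B (X p) \<partial>M) = 0"
  shows "AE p in M. real_cond_exp M (vimage_algebra (space M) X N) f p = 0"
proof -
  let ?F = "vimage_algebra (space M) X N"
  have sets_F: "sets ?F = {X -` B \<inter> space M | B. B \<in> sets N}"
    using X by (intro sets_vimage_algebra2) (auto dest: measurable_space)
  have "subalgebra M ?F"
    unfolding subalgebra_def sets_F using X by auto
  then interpret finite_measure_subalgebra M ?F
    using assms(1) by (simp add: finite_measure_subalgebra_def finite_measure_subalgebra_axioms_def)
  have "AE p in M. real_cond_exp M ?F f p = (\<lambda>_. 0) p"
  proof (rule real_cond_exp_charact)
    fix A assume "A \<in> sets ?F"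
    then obtain B where B: "B \<in> sets N" and A: "A = X -` B \<inter> space M" unfolding sets_F by blast
    have "(\<integral>p\<in>A. f p \<partial>M) = (\<integral>p. f p * indicator B (X p) \<partial>M)"
      unfolding set_lebesgue_integral_def A
      by (intro Bochner_Integration.integral_cong) (auto simp: indicator_def)
    then show "(\<integral>p\<in>A. f p \<partial>M) = (\<integral>p\<in>A. (\<lambda>_. 0) p \<partial>M)"
      using orth[OF B] by (simp add: set_lebesgue_integral_def)
  qed (simp_all add: assms(3))
  then show ?thesis by simp
qed

theorem mainTheorem17:
  fixes g :: real and n :: nat and f :: "pt3 \<Rightarrow> real"
  assumes "g > 0"
    and "poly3_le n f"
    and "\<forall>h. Q_elem g n h \<longrightarrow> (\<integral>p. f p * h p \<partial>nu3 g) = 0"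
  shows "\<forall>i\<in>{1,2,3::nat}.
           AE p in nu3 g. real_cond_exp (nu3 g)
              (vimage_algebra (space (nu3 g)) (coord i) borel) f p = 0"
proof
  fix i :: nat assume i: "i \<in> {1,2,3}"
  note orth = orthogonal_indicator_coord[OF assms(1-3) i]
  have "integrable (nu3 g) f"
    using orth(1)[of UNIV] by simp
  moreover have "coord i \<in> measurable (nu3 g) borel"
    by (rule measurable_nu3) simp
  ultimately show "AE p in nu3 g. real_cond_exp (nu3 g)
      (vimage_algebra (space (nu3 g)) (coord i) borel) f p = 0"
    using real_cond_exp_vimage_eq_0[OF finite_measure_nu3[OF assms(1)]] orth(2) by blast
qed

end
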